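(* Let $H=\sum_i h_i$ be the parent Hamiltonian of a quantum circuit $C$ of depth $d$ and lightcone size $\ell$. Then the terms of $H$ can be $\Delta$-colored with $\Delta\le\ell\cdot2^d+1$ colors, i.e. the index set of the terms can be partitioned into $\Delta$ subsets such that no two terms $h_i,h_j$ in the same subset have overlapping supports.
   Context: $C$ consists of $d$ layers of two-qubit gates on $n$ qubits. The parent Hamiltonian is $H=\sum_{i\in[n]}h_i$ with $h_i=C(|1\rangle\langle1|_i\otimes\mathbb I_{[n]\setminus i})C^\dagger$. The lightcone $\mathsf L_i$ of qubit $i$ is the set of qubits reachable from $i$ via gates of $C$ and $\ell=\max_i|\mathsf L_i|$; the support of $h_i$ is contained in $\mathsf L_i$. *)

theory Defs
  imports Main
begin

text \<open>Combinatorial model of a depth-d circuit of two-qubit gates on qubits {0..<n}.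
A circuit is a list of layers (applied in list order); a layer is a set of gates;
a gate is the set of the two qubits it acts on.\<close>

definition valid_layer :: "nat \<Rightarrow> nat set set \<Rightarrow> bool" where
  "valid_layer n G \<longleftrightarrow>
     (\<forall>g\<in>G. card g = 2 \<and> g \<subseteq> {..<n}) \<and>
     (\<forall>g\<in>G. \<forall>g'\<in>G. g \<noteq> g' \<longrightarrow> g \<inter> g' = {})"

definition valid_circuit :: "nat \<Rightarrow> nat set set list \<Rightarrow> bool" where
  "valid_circuit n C \<longleftrightarrow> (\<forall>G\<in>set C. valid_layer n G)"

fun reach :: "nat set set list \<Rightarrow> nat set \<Rightarrow> nat set" where
  "reach [] S = S"
| "reach (G # Gs) S = reach Gs (S \<union> \<Union>{g \<in> G. g \<inter> S \<noteq> {}})"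

definition lightcone :: "nat set set list \<Rightarrow> nat \<Rightarrow> nat set" where
  "lightcone C i = reach C {i}"

definition lightcone_size :: "nat \<Rightarrow> nat set set list \<Rightarrow> nat" where
  "lightcone_size n C = Max ((\<lambda>i. card (lightcone C i)) ` {..<n})"

end

theory Submission
  imports Defs
begin

(* Terms h_i and h_j can only overlap at a qubit q lying in both lightcones, i.e. j lies in
   the backward lightcone of some q in L_i.  Each layer of two-qubit gates at most doubles a
   backward lightcone, so h_i conflicts with at most \<ell> 2^d other terms, and a greedy colouring
   of the conflict graph needs at most \<ell> 2^d + 1 colours. *)

definition spread :: "nat set set \<Rightarrow> nat set \<Rightarrow> nat set" where
  "spread G S = S \<union> \<Union>{g \<in> G. g \<inter> S \<noteq> {}}"

lemma reach_Cons: "reach (G # Gs) S = reach Gs (spread G S)"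
  by (simp add: spread_def)

lemma spread_eq_UN: "spread G S = (\<Union>s\<in>S. spread G {s})"
  unfolding spread_def by blast

lemma reach_eq_UN: "reach C S = (\<Union>s\<in>S. reach C {s})"
proof (induction C arbitrary: S)
  case Nil
  show ?case by simp
next
  case (Cons G Gs)
  have "reach (G # Gs) S = (\<Union>k\<in>spread G S. reach Gs {k})"
    unfolding reach_Cons by (rule Cons.IH)
  also have "\<dots> = (\<Union>s\<in>S. \<Union>k\<in>spread G {s}. reach Gs {k})"
    by (subst spread_eq_UN) (rule UN_UN_flatten)
  also have "\<dots> = (\<Union>s\<in>S. reach (G # Gs) {s})"
    by (simp only: reach_Cons Cons.IH[symmetric])
  finally show ?case .
qed

fun backward_lightcone :: "nat set set list \<Rightarrow> nat \<Rightarrow> nat set" where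
  "backward_lightcone [] q = {q}"
| "backward_lightcone (G # Gs) q = spread G (backward_lightcone Gs q)"

lemma mem_backward_lightcone_iff: "j \<in> backward_lightcone C q \<longleftrightarrow> q \<in> lightcone C j"
  unfolding lightcone_def
proof (induction C arbitrary: j)
  case Nil
  show ?case by auto
next
  case (Cons G Gs)
  have "q \<in> reach (G # Gs) {j} \<longleftrightarrow> (\<exists>k\<in>spread G {j}. k \<in> backward_lightcone Gs q)"
    using Cons.IH by (subst reach_Cons, subst reach_eq_UN) blast
  also have "\<dots> \<longleftrightarrow> j \<in> spread G (backward_lightcone Gs q)"
    unfolding spread_def by blast
  finally show ?case by simp
qed

lemma card_spread_singleton_le:
  assumes "valid_layer n G"
  shows "finite (spread G {k}) \<and> card (spread G {k}) \<le> 2"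
proof (cases "\<exists>g\<in>G. k \<in> g")
  case True
  then obtain g where g: "g \<in> G" "k \<in> g" by blast
  have "{g' \<in> G. g' \<inter> {k} \<noteq> {}} = {g}"
    using assms g unfolding valid_layer_def by blast
  then have "spread G {k} = g"
    using g unfolding spread_def by auto
  moreover have "card g = 2"
    using assms g unfolding valid_layer_def by blast
  ultimately show ?thesis
    using card.infinite by fastforce
next
  case False
  then have "spread G {k} = {k}"
    unfolding spread_def by auto
  then show ?thesis by simp
qed

lemma card_spread_le:
  assumes "valid_layer n G" and "finite K"
  shows "finite (spread G K) \<and> card (spread G K) \<le> 2 * card K"
proof -
  have "finite (spread G K)"
    using assms card_spread_singleton_le by (subst spread_eq_UN) blast
  moreover have "card (spread G K) \<le> (\<Sum>k\<in>K. card (spread G {k}))"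
    by (subst spread_eq_UN) (rule card_UN_le[OF assms(2)])
  moreover have "\<dots> \<le> (\<Sum>k\<in>K. 2)"
    using card_spread_singleton_le[OF assms(1)] by (intro sum_mono) blast
  ultimately show ?thesis by simp
qed

lemma card_backward_lightcone_le:
  assumes "valid_circuit n C"
  shows "finite (backward_lightcone C q) \<and> card (backward_lightcone C q) \<le> 2 ^ length C"
  using assms
proof (induction C)
  case Nil
  show ?case by simp
next
  case (Cons G Gs)
  then have "valid_layer n G" and "valid_circuit n Gs"
    unfolding valid_circuit_def by auto
  then show ?case
    using Cons.IH card_spread_le[of n G "backward_lightcone Gs q"] by fastforce
qed

lemma finite_reach:
  assumes "valid_circuit n C" and "finite S"
  shows "finite (reach C S)"
  using assms
proof (induction C arbitrary: S)
  case Nil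
  then show ?case by simp
next
  case (Cons G Gs)
  then have "valid_layer n G" and "valid_circuit n Gs"
    unfolding valid_circuit_def by auto
  then have "finite (spread G S)"
    using card_spread_le Cons.prems(2) by blast
  then show ?case
    unfolding reach_Cons using Cons.IH \<open>valid_circuit n Gs\<close> by blast
qed

lemma finite_lightcone: "valid_circuit n C \<Longrightarrow> finite (lightcone C i)"
  unfolding lightcone_def using finite_reach by blast

lemma card_UN_backward_lightcone_le:
  assumes "valid_circuit n C" and "finite S"
  shows "card (\<Union>q\<in>S. backward_lightcone C q) \<le> card S * 2 ^ length C"
proof -
  have "card (\<Union>q\<in>S. backward_lightcone C q) \<le> (\<Sum>q\<in>S. card (backward_lightcone C q))"
    using assms(2) by (rule card_UN_le)
  also have "\<dots> \<le> (\<Sum>q\<in>S. 2 ^ length C)"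
    using card_backward_lightcone_le[OF assms(1)] by (intro sum_mono) blast
  finally show ?thesis by simp
qed

lemma overlapping_supports_subset_backward_lightcones:
  assumes "\<And>i. i < n \<Longrightarrow> supp i \<subseteq> lightcone C i" and "i < n"
  shows "{j \<in> {..<n}. supp i \<inter> supp j \<noteq> {}} \<subseteq> (\<Union>q\<in>lightcone C i. backward_lightcone C q)"
proof
  fix j
  assume "j \<in> {j \<in> {..<n}. supp i \<inter> supp j \<noteq> {}}"
  then obtain q where "q \<in> supp i" and "q \<in> supp j" and "j < n"
    by blast
  then have "q \<in> lightcone C i" and "j \<in> backward_lightcone C q"
    using assms by (auto simp: mem_backward_lightcone_iff)
  then show "j \<in> (\<Union>q\<in>lightcone C i. backward_lightcone C q)"
    by blast
qed

lemma card_lightcone_le_lightcone_size: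
  "i < n \<Longrightarrow> card (lightcone C i) \<le> lightcone_size n C"
  unfolding lightcone_size_def by (intro Max_ge) auto

lemma exists_le_notin_image:
  assumes "finite N" and "card N \<le> D"
  shows "\<exists>c \<le> D. c \<notin> f ` N"
proof (rule ccontr)
  assume "\<not> (\<exists>c \<le> D. c \<notin> f ` N)"
  then have "{..D} \<subseteq> f ` N"
    by auto
  then have "card {..D} \<le> card (f ` N)"
    using assms(1) by (intro card_mono) auto
  also have "\<dots> \<le> card N"
    using assms(1) by (rule card_image_le)
  finally show False
    using assms(2) by simp
qed

lemma greedy_colouring:
  fixes adj :: "'a \<Rightarrow> 'a \<Rightarrow> bool"
  assumes "finite V"
    and sym: "\<And>i j. adj i j \<Longrightarrow> adj j i"
    and degree: "\<And>i. i \<in> V \<Longrightarrow> card {j \<in> V. j \<noteq> i \<and> adj i j} \<le> D"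
  shows "\<exists>col :: 'a \<Rightarrow> nat. (\<forall>i\<in>V. col i \<le> D) \<and>
           (\<forall>i\<in>V. \<forall>j\<in>V. i \<noteq> j \<and> col i = col j \<longrightarrow> \<not> adj i j)"
  using assms(1) subset_refl
proof (induction V rule: finite_subset_induct')
  case empty
  show ?case by simp
next
  case (insert a F)
  then obtain col where col_le: "\<forall>i\<in>F. col i \<le> D"
    and col_proper: "\<forall>i\<in>F. \<forall>j\<in>F. i \<noteq> j \<and> col i = col j \<longrightarrow> \<not> adj i j"
    by blast
  define N where "N = {j \<in> F. adj a j}"
  have "finite N"
    using insert.hyps(1) unfolding N_def by simp
  have "card N \<le> card {j \<in> V. j \<noteq> a \<and> adj a j}"
    using insert.hyps \<open>finite V\<close> unfolding N_def by (intro card_mono) auto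
  also have "\<dots> \<le> D"
    using degree[OF \<open>a \<in> V\<close>] .
  finally obtain c where "c \<le> D" and c_free: "c \<notin> col ` N"
    using exists_le_notin_image[OF \<open>finite N\<close>, of D col] by blast
  have a_free: "\<not> adj a k" if "k \<in> F" and "col k = c" for k
    using that c_free unfolding N_def by auto
  define col' where "col' = col(a := c)"
  show ?case
  proof (intro exI[of _ col'] conjI ballI impI)
    fix i
    assume "i \<in> insert a F"
    then show "col' i \<le> D"
      using col_le \<open>c \<le> D\<close> unfolding col'_def by auto
  next
    fix i j
    assume "i \<in> insert a F" and "j \<in> insert a F" and "i \<noteq> j \<and> col' i = col' j"
    then consider "i = a" "j \<in> F" "col j = c" | "j = a" "i \<in> F" "col i = c"
      | "i \<in> F" "j \<in> F" "i \<noteq> j" "col i = col j"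
      using insert.hyps(4) unfolding col'_def by (auto split: if_splits)
    then show "\<not> adj i j"
    proof cases
      case 1
      then show ?thesis using a_free by blast
    next
      case 2
      then show ?thesis using a_free sym[of i j] by blast
    next
      case 3
      then show ?thesis using col_proper by blast
    qed
  qed
qed

lemma card_overlapping_supports_le:
  assumes "valid_circuit n C" and "\<And>i. i < n \<Longrightarrow> supp i \<subseteq> lightcone C i" and "i < n"
  shows "card {j \<in> {..<n}. j \<noteq> i \<and> supp i \<inter> supp j \<noteq> {}} \<le> lightcone_size n C * 2 ^ length C"
proof -
  have "card {j \<in> {..<n}. j \<noteq> i \<and> supp i \<inter> supp j \<noteq> {}}
      \<le> card (\<Union>q\<in>lightcone C i. backward_lightcone C q)"
    using overlapping_supports_subset_backward_lightcones[OF assms(2,3)]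
      finite_lightcone[OF assms(1)] card_backward_lightcone_le[OF assms(1)]
    by (intro card_mono) auto
  also have "\<dots> \<le> card (lightcone C i) * 2 ^ length C"
    using assms(1) finite_lightcone[OF assms(1)] by (rule card_UN_backward_lightcone_le)
  also have "\<dots> \<le> lightcone_size n C * 2 ^ length C"
    using card_lightcone_le_lightcone_size[OF assms(3)] by simp
  finally show ?thesis .
qed

theorem lemma4p5:
  fixes n :: nat and C :: "nat set set list" and supp :: "nat \<Rightarrow> nat set"
  assumes "valid_circuit n C"
    and "\<And>i. i < n \<Longrightarrow> supp i \<subseteq> lightcone C i"
  shows "\<exists>col :: nat \<Rightarrow> nat.
           (\<forall>i<n. col i < lightcone_size n C * 2 ^ length C + 1) \<and>
           (\<forall>i<n. \<forall>j<n. i \<noteq> j \<and> col i = col j \<longrightarrow> supp i \<inter> supp j = {})"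
proof -
  define D where "D = lightcone_size n C * 2 ^ length C"
  let ?conflict = "\<lambda>i j. supp i \<inter> supp j \<noteq> {}"
  have "card {j \<in> {..<n}. j \<noteq> i \<and> ?conflict i j} \<le> D" if "i \<in> {..<n}" for i
    using card_overlapping_supports_le[OF assms] that unfolding D_def by simp
  then obtain col :: "nat \<Rightarrow> nat" where col_le: "\<forall>i\<in>{..<n}. col i \<le> D"
    and col_proper: "\<forall>i\<in>{..<n}. \<forall>j\<in>{..<n}. i \<noteq> j \<and> col i = col j \<longrightarrow> \<not> ?conflict i j"
    using greedy_colouring[of "{..<n}" ?conflict D] by blast
  have col_bound: "\<forall>i<n. col i < D + 1"
    using col_le by (simp add: less_Suc_eq_le)
  show ?thesis
    unfolding D_def[symmetric] by (rule exI[of _ col]) (use col_bound col_proper in auto)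
qed

end
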